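(* Let $G=KB(H)$ for some triangle-free graph $H$. If $I$ is an independent set of $G$ with $|I|=n\ge 3$ such that $\left|\bigcap_{v\in I}N_G(v)\right|\ge 3$, then $\left|\bigcup_{v\in I}N_G(v)\right|>n$.
   Context: All graphs are finite and simple. A biclique of a graph $H$ is a set $P\subseteq V(H)$ such that the induced subgraph $H[P]$ is a complete bipartite graph with both parts nonempty, and $P$ is inclusion-maximal with this property. The biclique graph $KB(H)$ has the set of bicliques of $H$ as vertex set, two distinct bicliques being adjacent iff they intersect. $N_G(v)$ denotes the (open) neighbourhood of $v$ in $G$. *)

theory Defs
  imports Main
begin

definition simple_graph :: "'a set \<Rightarrow> ('a \<Rightarrow> 'a \<Rightarrow> bool) \<Rightarrow> bool" where
  "simple_graph V E \<longleftrightarrow> finite V \<and> (\<forall>x y. E x y \<longrightarrow> x \<in> V \<and> y \<in> V)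
     \<and> (\<forall>x y. E x y \<longrightarrow> E y x) \<and> (\<forall>x. \<not> E x x)"

definition triangle_free :: "'a set \<Rightarrow> ('a \<Rightarrow> 'a \<Rightarrow> bool) \<Rightarrow> bool" where
  "triangle_free V E \<longleftrightarrow> \<not> (\<exists>x\<in>V. \<exists>y\<in>V. \<exists>z\<in>V. E x y \<and> E y z \<and> E x z)"

definition complete_bipartite_set :: "'a set \<Rightarrow> ('a \<Rightarrow> 'a \<Rightarrow> bool) \<Rightarrow> 'a set \<Rightarrow> bool" where
  "complete_bipartite_set V E P \<longleftrightarrow> P \<subseteq> V \<and>
     (\<exists>A B. A \<noteq> {} \<and> B \<noteq> {} \<and> A \<inter> B = {} \<and> A \<union> B = P
        \<and> (\<forall>a\<in>A. \<forall>b\<in>B. E a b)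
        \<and> (\<forall>a\<in>A. \<forall>a'\<in>A. \<not> E a a')
        \<and> (\<forall>b\<in>B. \<forall>b'\<in>B. \<not> E b b'))"

definition biclique :: "'a set \<Rightarrow> ('a \<Rightarrow> 'a \<Rightarrow> bool) \<Rightarrow> 'a set \<Rightarrow> bool" where
  "biclique V E P \<longleftrightarrow> complete_bipartite_set V E P \<and>
     (\<forall>Q. complete_bipartite_set V E Q \<and> P \<subseteq> Q \<longrightarrow> Q = P)"

definition KB_vertices :: "'a set \<Rightarrow> ('a \<Rightarrow> 'a \<Rightarrow> bool) \<Rightarrow> 'a set set" where
  "KB_vertices V E = {P. biclique V E P}"

definition KB_adj :: "'a set \<Rightarrow> ('a \<Rightarrow> 'a \<Rightarrow> bool) \<Rightarrow> 'a set \<Rightarrow> 'a set \<Rightarrow> bool" where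
  "KB_adj V E P Q \<longleftrightarrow> biclique V E P \<and> biclique V E Q \<and> P \<noteq> Q \<and> P \<inter> Q \<noteq> {}"

definition nbhd :: "'b set \<Rightarrow> ('b \<Rightarrow> 'b \<Rightarrow> bool) \<Rightarrow> 'b \<Rightarrow> 'b set" where
  "nbhd W R v = {u \<in> W. R v u}"

definition independent_set :: "'b set \<Rightarrow> ('b \<Rightarrow> 'b \<Rightarrow> bool) \<Rightarrow> 'b set \<Rightarrow> bool" where
  "independent_set W R I \<longleftrightarrow> I \<subseteq> W \<and> (\<forall>u\<in>I. \<forall>v\<in>I. \<not> R u v)"

end

theory Submission
  imports Defs
begin

text \<open>In a triangle-free graph, a vertex v with a neighbour spans the biclique
  star v = N(v) \<union> {x. N(v) \<subseteq> N(x)}, and every biclique P containing v satisfies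
  star v - P \<subseteq> N(v); hence vertices of disjoint bicliques have distinct stars.
  Let W be a common KB-neighbour of the pairwise disjoint bicliques in I. If every P in I
  has a vertex whose star is neither P nor W, these stars together with W are n + 1
  distinct KB-neighbours of I. Otherwise some P in I has only the stars P and W, the latter
  being the star of some u in P. For three distinct common neighbours W these vertices u
  lie in distinct members of I and are pairwise adjacent, which is a triangle.\<close>

definition common_nbhd :: "'a set \<Rightarrow> ('a \<Rightarrow> 'a \<Rightarrow> bool) \<Rightarrow> 'a set \<Rightarrow> 'a set" where
  "common_nbhd V E S = {x \<in> V. \<forall>y\<in>S. E x y}"

definition star :: "'a set \<Rightarrow> ('a \<Rightarrow> 'a \<Rightarrow> bool) \<Rightarrow> 'a \<Rightarrow> 'a set" where
  "star V E v = nbhd V E v \<union> common_nbhd V E (nbhd V E v)"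

abbreviation KB_nbhd :: "'a set \<Rightarrow> ('a \<Rightarrow> 'a \<Rightarrow> bool) \<Rightarrow> 'a set \<Rightarrow> 'a set set" where
  "KB_nbhd V E P \<equiv> nbhd (KB_vertices V E) (KB_adj V E) P"

lemma complete_bipartite_setI:
  assumes "A \<noteq> {}" "B \<noteq> {}" "A \<inter> B = {}" "A \<union> B \<subseteq> V"
    "\<forall>a\<in>A. \<forall>b\<in>B. E a b" "\<forall>a\<in>A. \<forall>a'\<in>A. \<not> E a a'" "\<forall>b\<in>B. \<forall>b'\<in>B. \<not> E b b'"
  shows "complete_bipartite_set V E (A \<union> B)"
  using assms unfolding complete_bipartite_set_def by blast

lemma biclique_subset: "biclique V E P \<Longrightarrow> P \<subseteq> V"
  unfolding biclique_def complete_bipartite_set_def by blast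

lemma biclique_maximal:
  "biclique V E P \<Longrightarrow> complete_bipartite_set V E Q \<Longrightarrow> P \<subseteq> Q \<Longrightarrow> Q = P"
  unfolding biclique_def by blast

lemma KB_nbhd_iff: "Q \<in> KB_nbhd V E P \<longleftrightarrow> KB_adj V E P Q"
  unfolding nbhd_def KB_vertices_def KB_adj_def by blast

lemma finite_KB_vertices: "finite V \<Longrightarrow> finite (KB_vertices V E)"
  by (rule finite_subset[of _ "Pow V"]) (auto simp: KB_vertices_def dest: biclique_subset)

locale triangle_free_graph =
  fixes V :: "'a set" and E :: "'a \<Rightarrow> 'a \<Rightarrow> bool"
  assumes simple: "simple_graph V E" and triangle_free: "triangle_free V E"
begin

lemma edge_vertices: "E x y \<Longrightarrow> x \<in> V \<and> y \<in> V"
  using simple unfolding simple_graph_def by blast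

lemma edge_sym: "E x y \<Longrightarrow> E y x"
  using simple unfolding simple_graph_def by blast

lemma no_loop: "\<not> E x x"
  using simple unfolding simple_graph_def by blast

lemma no_triangle: "E x y \<Longrightarrow> E y z \<Longrightarrow> E x z \<Longrightarrow> False"
  using triangle_free edge_vertices unfolding triangle_free_def by blast

lemma complete_bipartite_setE:
  assumes "complete_bipartite_set V E Q" "v \<in> Q"
  obtains A B where "A \<noteq> {}" "B \<noteq> {}" "A \<inter> B = {}" "A \<union> B = Q" "v \<in> A"
    "\<forall>a\<in>A. \<forall>b\<in>B. E a b" "\<forall>a\<in>A. \<forall>a'\<in>A. \<not> E a a'" "\<forall>b\<in>B. \<forall>b'\<in>B. \<not> E b b'"
proof -
  from assms(1) obtain A B where AB: "A \<noteq> {}" "B \<noteq> {}" "A \<inter> B = {}" "A \<union> B = Q"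
    "\<forall>a\<in>A. \<forall>b\<in>B. E a b" "\<forall>a\<in>A. \<forall>a'\<in>A. \<not> E a a'" "\<forall>b\<in>B. \<forall>b'\<in>B. \<not> E b b'"
    unfolding complete_bipartite_set_def by blast
  show thesis
  proof (cases "v \<in> A")
    case True
    then show thesis using AB that by blast
  next
    case False
    then have "v \<in> B" using AB(4) assms(2) by blast
    moreover have "\<forall>b\<in>B. \<forall>a\<in>A. E b a"
      using AB(5) edge_sym by blast
    ultimately show thesis
      using AB that[of B A] by blast
  qed
qed

lemma biclique_contains_common_nbhd:
  assumes P: "biclique V E P" and v: "v \<in> P"
  shows "common_nbhd V E (nbhd V E v) \<subseteq> P"
proof
  obtain A B where AB: "A \<noteq> {}" "B \<noteq> {}" "A \<inter> B = {}" "A \<union> B = P" "v \<in> A"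
    "\<forall>a\<in>A. \<forall>b\<in>B. E a b" "\<forall>a\<in>A. \<forall>a'\<in>A. \<not> E a a'" "\<forall>b\<in>B. \<forall>b'\<in>B. \<not> E b b'"
    using P v unfolding biclique_def by (elim conjE complete_bipartite_setE)
  fix x assume x: "x \<in> common_nbhd V E (nbhd V E v)"
  have "B \<subseteq> nbhd V E v"
    using AB biclique_subset[OF P] unfolding nbhd_def by blast
  then have xB: "\<forall>b\<in>B. E x b" and "x \<in> V"
    using x unfolding common_nbhd_def by auto
  obtain b where b: "b \<in> B"
    using AB(2) by blast
  have x_A: "\<not> E x a" "\<not> E a x" if "a \<in> A" for a
  proof -
    have "E a b" "E x b"
      using AB(6) that xB b by auto
    then show "\<not> E x a"
      using no_triangle by blast
    then show "\<not> E a x"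
      using edge_sym by blast
  qed
  have "x \<notin> B"
    using xB no_loop by blast
  then have "complete_bipartite_set V E (insert x A \<union> B)"
    using AB xB x_A \<open>x \<in> V\<close> biclique_subset[OF P] no_loop
    by (intro complete_bipartite_setI) blast+
  then have "insert x P = P"
    using biclique_maximal[OF P] AB(4) by auto
  then show "x \<in> P" by blast
qed

lemma biclique_has_neighbour:
  assumes "biclique V E P" "v \<in> P"
  obtains w where "w \<in> P" "E v w"
proof -
  obtain A B where "B \<noteq> {}" "A \<union> B = P" "v \<in> A" "\<forall>a\<in>A. \<forall>b\<in>B. E a b"
    using assms unfolding biclique_def by (elim conjE complete_bipartite_setE)
  then show thesis
    using that by blast
qed

lemma self_in_star: "v \<in> V \<Longrightarrow> v \<in> star V E v"
  unfolding star_def common_nbhd_def nbhd_def by auto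

lemma nbhd_subset_star: "nbhd V E v \<subseteq> star V E v"
  unfolding star_def by blast

lemma star_subset_nbhd_of_biclique:
  "biclique V E P \<Longrightarrow> v \<in> P \<Longrightarrow> star V E v - P \<subseteq> nbhd V E v"
  using biclique_contains_common_nbhd unfolding star_def by blast

lemma star_biclique:
  assumes v: "v \<in> V" and ne: "nbhd V E v \<noteq> {}"
  shows "biclique V E (star V E v)"
  unfolding biclique_def
proof (intro conjI allI impI)
  let ?N = "nbhd V E v" and ?C = "common_nbhd V E (nbhd V E v)"
  have "\<not> E a a'" if "a \<in> ?C" "a' \<in> ?C" for a a'
    using that ne no_triangle edge_sym unfolding common_nbhd_def by blast
  moreover have "\<not> E b b'" if "b \<in> ?N" "b' \<in> ?N" for b b'
    using that no_triangle unfolding nbhd_def by blast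
  moreover have "v \<in> ?C" "?C \<inter> ?N = {}"
    using v no_loop edge_sym unfolding common_nbhd_def nbhd_def by auto
  moreover have "?C \<union> ?N \<subseteq> V" "\<forall>a\<in>?C. \<forall>b\<in>?N. E a b"
    unfolding common_nbhd_def nbhd_def by auto
  ultimately have "complete_bipartite_set V E (?C \<union> ?N)"
    using ne by (intro complete_bipartite_setI) blast+
  then show star_cb: "complete_bipartite_set V E (star V E v)"
    unfolding star_def by (simp add: Un_commute)
  fix Q assume Q: "complete_bipartite_set V E Q \<and> star V E v \<subseteq> Q"
  moreover have "v \<in> Q"
    using Q self_in_star[OF v] by blast
  ultimately obtain C D where CD: "C \<inter> D = {}" "C \<union> D = Q" "v \<in> C"
    "\<forall>a\<in>C. \<forall>b\<in>D. E a b" "\<forall>a\<in>C. \<forall>a'\<in>C. \<not> E a a'"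
    by (elim conjE complete_bipartite_setE)
  have QV: "Q \<subseteq> V"
    using Q unfolding complete_bipartite_set_def by blast
  have "?N \<subseteq> Q"
    using Q nbhd_subset_star by blast
  then have "D = ?N"
    using CD QV unfolding nbhd_def by blast
  then have "C \<subseteq> ?C"
    using CD QV unfolding common_nbhd_def by blast
  then show "Q = star V E v"
    using Q CD \<open>D = ?N\<close> unfolding star_def by blast
qed

lemma star_in_KB_nbhd:
  assumes P: "biclique V E P" and v: "v \<in> P" and "star V E v \<noteq> P"
  shows "star V E v \<in> KB_nbhd V E P"
proof -
  have "v \<in> V"
    using P v biclique_subset by blast
  moreover obtain w where "E v w"
    using biclique_has_neighbour[OF P v] by blast
  ultimately have "biclique V E (star V E v)" and "v \<in> star V E v"
    using star_biclique self_in_star edge_vertices unfolding nbhd_def by blast+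
  then show ?thesis
    using assms unfolding KB_nbhd_iff KB_adj_def by blast
qed

lemma star_neq_if_disjoint:
  assumes P: "biclique V E P" and Q: "biclique V E Q" and "P \<inter> Q = {}"
    and u: "u \<in> P" and v: "v \<in> Q"
  shows "star V E u \<noteq> star V E v"
proof
  assume eq: "star V E u = star V E v"
  obtain w where w: "w \<in> Q" "E v w"
    using biclique_has_neighbour[OF Q v] by blast
  have "v \<in> star V E u" "w \<in> star V E u"
    using eq self_in_star nbhd_subset_star biclique_subset[OF Q] v w
    unfolding nbhd_def by blast+
  then have "v \<in> nbhd V E u" "w \<in> nbhd V E u"
    using star_subset_nbhd_of_biclique[OF P u] \<open>P \<inter> Q = {}\<close> v w by blast+
  then show False
    using no_triangle w(2) unfolding nbhd_def by blast
qed

text \<open>If every vertex of P had star P, then P would be closed under neighbourhoods and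
  would contain the biclique W meeting it, contradicting the maximality of W.\<close>
lemma exists_star_neq_biclique:
  assumes P: "biclique V E P" and W: "biclique V E W" and "W \<noteq> P" and "x \<in> P \<inter> W"
  shows "\<exists>v\<in>P. star V E v \<noteq> P"
proof (rule ccontr)
  assume "\<not> (\<exists>v\<in>P. star V E v \<noteq> P)"
  then have closed: "nbhd V E v \<subseteq> P" if "v \<in> P" for v
    using that nbhd_subset_star by blast
  obtain C D where CD: "D \<noteq> {}" "C \<union> D = W" "x \<in> C" "\<forall>a\<in>C. \<forall>b\<in>D. E a b"
    using W \<open>x \<in> P \<inter> W\<close> unfolding biclique_def by (elim conjE IntE complete_bipartite_setE)
  then have "D \<subseteq> nbhd V E x"
    using biclique_subset[OF W] unfolding nbhd_def by blast
  then have "D \<subseteq> P"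
    using closed \<open>x \<in> P \<inter> W\<close> by blast
  obtain d where "d \<in> D"
    using CD(1) by blast
  have "C \<subseteq> nbhd V E d"
    using CD \<open>d \<in> D\<close> biclique_subset[OF W] edge_sym unfolding nbhd_def by blast
  then have "C \<subseteq> P"
    using closed \<open>D \<subseteq> P\<close> \<open>d \<in> D\<close> by blast
  then have "P = W"
    using biclique_maximal[OF W] P \<open>D \<subseteq> P\<close> CD(2) unfolding biclique_def by blast
  with \<open>W \<noteq> P\<close> show False by simp
qed

lemma adjacent_if_stars_trapped:
  assumes P: "biclique V E P" and P': "biclique V E P'" and "P \<inter> P' = {}"
    and u: "u \<in> P" and trapped: "star V E ` P \<subseteq> {P, star V E u}"
    and u': "u' \<in> P'" and z: "z \<in> P \<inter> star V E u'"
  shows "E u u'"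
proof -
  have "z \<in> nbhd V E u'"
    using star_subset_nbhd_of_biclique[OF P' u'] z \<open>P \<inter> P' = {}\<close> by blast
  then have "u' \<in> nbhd V E z"
    using biclique_subset[OF P'] u' edge_sym unfolding nbhd_def by blast
  then have "u' \<in> star V E z"
    using nbhd_subset_star by blast
  moreover have "star V E z \<in> {P, star V E u}"
    using trapped z by blast
  ultimately have "u' \<in> star V E u - P"
    using u' \<open>P \<inter> P' = {}\<close> by blast
  then show ?thesis
    using star_subset_nbhd_of_biclique[OF P u] unfolding nbhd_def by blast
qed

end

locale KB_independent_set = triangle_free_graph +
  fixes I :: "'a set set"
  assumes independent: "independent_set (KB_vertices V E) (KB_adj V E) I"
begin

lemma biclique_if_mem: "P \<in> I \<Longrightarrow> biclique V E P"
  using independent unfolding independent_set_def KB_vertices_def by blast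

lemma disjoint_if_mem: "P \<in> I \<Longrightarrow> Q \<in> I \<Longrightarrow> P \<noteq> Q \<Longrightarrow> P \<inter> Q = {}"
  using independent biclique_if_mem unfolding independent_set_def KB_adj_def by blast

lemma card_less_card_KB_nbhds:
  assumes "finite I" "I \<noteq> {}" and W: "W \<in> (\<Inter>P\<in>I. KB_nbhd V E P)"
    and avoid: "\<forall>P\<in>I. \<exists>v\<in>P. star V E v \<notin> {P, W}"
  shows "card I < card (\<Union>P\<in>I. KB_nbhd V E P)"
proof -
  let ?U = "\<Union>P\<in>I. KB_nbhd V E P"
  obtain g where g: "\<And>P. P \<in> I \<Longrightarrow> g P \<in> P \<and> star V E (g P) \<notin> {P, W}"
    using avoid by metis
  define f where "f P = star V E (g P)" for P
  have "f P \<in> KB_nbhd V E P" if "P \<in> I" for P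
    using star_in_KB_nbhd[OF biclique_if_mem[OF that]] g[OF that] unfolding f_def by blast
  then have "f ` I \<subseteq> ?U"
    by blast
  moreover have "W \<in> ?U" "W \<notin> f ` I"
    using W \<open>I \<noteq> {}\<close> g unfolding f_def by auto
  moreover have "inj_on f I"
    using star_neq_if_disjoint biclique_if_mem disjoint_if_mem g
    unfolding f_def by (meson inj_onI)
  moreover have "finite ?U"
    using simple finite_KB_vertices unfolding simple_graph_def nbhd_def
    by (auto intro: finite_subset)
  ultimately have "card (insert W (f ` I)) \<le> card ?U"
    by (intro card_mono) auto
  then show ?thesis
    using \<open>finite I\<close> \<open>W \<notin> f ` I\<close> \<open>inj_on f I\<close> by (simp add: card_image)
qed

lemma card_less_card_KB_nbhds_or_trapped:
  assumes "finite I" "I \<noteq> {}" and W: "W \<in> (\<Inter>P\<in>I. KB_nbhd V E P)"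
  shows "card I < card (\<Union>P\<in>I. KB_nbhd V E P)
    \<or> (\<exists>P\<in>I. \<exists>u\<in>P. star V E u = W \<and> star V E ` P \<subseteq> {P, W})"
proof (cases "\<forall>P\<in>I. \<exists>v\<in>P. star V E v \<notin> {P, W}")
  case True
  then show ?thesis
    using card_less_card_KB_nbhds assms by blast
next
  case False
  then obtain P where P: "P \<in> I" "star V E ` P \<subseteq> {P, W}"
    by blast
  then have "KB_adj V E P W"
    using W by (simp add: KB_nbhd_iff)
  then obtain u where "u \<in> P" "star V E u \<noteq> P"
    using exists_star_neq_biclique unfolding KB_adj_def by blast
  then show ?thesis
    using P by blast
qed

lemma trapped_vertices_adjacent:
  assumes W: "W \<in> (\<Inter>P\<in>I. KB_nbhd V E P)" and W': "W' \<in> (\<Inter>P\<in>I. KB_nbhd V E P)"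
    and "W \<noteq> W'"
    and P: "P \<in> I" "u \<in> P" "star V E u = W" "star V E ` P \<subseteq> {P, W}"
    and P': "P' \<in> I" "u' \<in> P'" "star V E u' = W'" "star V E ` P' \<subseteq> {P', W'}"
  shows "E u u'"
proof -
  have adj: "KB_adj V E P W'"
    using W' P(1) by (simp add: KB_nbhd_iff)
  have "P \<noteq> P'"
  proof
    assume "P = P'"
    then have "W' \<in> {P, W}"
      using P(4) P'(2,3) by blast
    then show False
      using adj \<open>W \<noteq> W'\<close> unfolding KB_adj_def by blast
  qed
  moreover obtain z where "z \<in> P \<inter> W'"
    using adj unfolding KB_adj_def by blast
  ultimately show ?thesis
    using adjacent_if_stars_trapped[OF biclique_if_mem[OF P(1)] biclique_if_mem[OF P'(1)]
        disjoint_if_mem[OF P(1) P'(1)] P(2) _ P'(2)] P(3,4) P'(3)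
    by blast
qed

end

theorem theorem4:
  fixes V :: "'a set" and E :: "'a \<Rightarrow> 'a \<Rightarrow> bool" and I :: "'a set set" and n :: nat
  assumes "simple_graph V E"
    and "triangle_free V E"
    and "independent_set (KB_vertices V E) (KB_adj V E) I"
    and "card I = n" and "n \<ge> 3"
    and "card (\<Inter>v\<in>I. nbhd (KB_vertices V E) (KB_adj V E) v) \<ge> 3"
  shows "card (\<Union>v\<in>I. nbhd (KB_vertices V E) (KB_adj V E) v) > n"
proof (rule ccontr)
  interpret KB_independent_set V E I
    using assms(1-3) by unfold_locales
  let ?CN = "\<Inter>P\<in>I. KB_nbhd V E P"
  assume "\<not> ?thesis"
  moreover have "finite I" "I \<noteq> {}"
    using assms(4,5) card.infinite by fastforce+
  ultimately have trapped: "\<exists>P\<in>I. \<exists>u\<in>P. star V E u = W \<and> star V E ` P \<subseteq> {P, W}"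
    if "W \<in> ?CN" for W
    using card_less_card_KB_nbhds_or_trapped that assms(4) by blast
  obtain T where "T \<subseteq> ?CN" "card T = 3"
    using obtain_subset_with_card_n assms(6) by metis
  moreover from \<open>card T = 3\<close> obtain W1 W2 W3 where "T = {W1, W2, W3}"
    and "W1 \<noteq> W2" "W2 \<noteq> W3" "W1 \<noteq> W3"
    unfolding card_3_iff by blast
  ultimately have W: "W1 \<in> ?CN" "W2 \<in> ?CN" "W3 \<in> ?CN"
    by (simp_all only: insert_subset)
  obtain P1 u1 where P1: "P1 \<in> I" "u1 \<in> P1" "star V E u1 = W1" "star V E ` P1 \<subseteq> {P1, W1}"
    using trapped[OF W(1)] by blast
  obtain P2 u2 where P2: "P2 \<in> I" "u2 \<in> P2" "star V E u2 = W2" "star V E ` P2 \<subseteq> {P2, W2}"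
    using trapped[OF W(2)] by blast
  obtain P3 u3 where P3: "P3 \<in> I" "u3 \<in> P3" "star V E u3 = W3" "star V E ` P3 \<subseteq> {P3, W3}"
    using trapped[OF W(3)] by blast
  have "E u1 u2" "E u2 u3" "E u1 u3"
    using trapped_vertices_adjacent[OF W(1) W(2) \<open>W1 \<noteq> W2\<close> P1 P2]
      trapped_vertices_adjacent[OF W(2) W(3) \<open>W2 \<noteq> W3\<close> P2 P3]
      trapped_vertices_adjacent[OF W(1) W(3) \<open>W1 \<noteq> W3\<close> P1 P3] .
  then show False
    using no_triangle by blast
qed

end
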